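(* Let $f:(0,\infty)\to(0,\infty)$ be non-increasing such that $t\mapsto t^2f(t)$ is non-decreasing, let $a\ge0$, $c>0$, and define \[ F(r):=\int_0^\infty t^{-a}e^{-\frac{r^2}{c^2t}}f(t)\,dt,\qquad r>0. \] If $a\le1$, assume additionally that there exist constants $c'>0$, $\gamma'>1-a$ and $R\ge0$ such that $\frac{f(tx)}{f(t)}\le c'x^{-\gamma'}$ for all $t>R$ and $x\ge1$. Then \[ F(r)\asymp r^{-2a+2}f(r^2)\quad\text{for all } r>R_0, \] where $R_0:=\sqrt R$ if $a\le1$ and $R_0:=0$ if $a>1$.
   Context: $g(r)\asymp h(r)$ for $r\in I$ means that $g(r)/h(r)$ stays between two positive constants (independent of $r$) for all $r\in I$. *)

theory Defs
  imports "HOL-Analysis.Analysis"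
begin

text \<open>F(r) = integral over (0,inf) of t^(-a) exp(-r^2/(c^2 t)) f(t) dt, taken as a
nonnegative (extended real) Lebesgue integral, so it is always defined.\<close>
definition Fint :: "real \<Rightarrow> real \<Rightarrow> (real \<Rightarrow> real) \<Rightarrow> real \<Rightarrow> ennreal" where
  "Fint a c f r = (\<integral>\<^sup>+ t. indicator {0<..} t *
      ennreal (t powr (-a) * exp (-(r^2) / (c^2 * t)) * f t) \<partial>lborel)"

end

theory Submission imports Defs begin

text \<open>Put q = r^2. On [q, 2q] the integrand is at least a constant times q^(-a) f(q), because
  t^2 f(t) non-decreasing gives f(2q) \<ge> f(q)/4; integrating over this interval of length q gives
  the lower bound. For the upper bound, on (0, q] the same monotonicity gives
  f(t) \<le> q^2 f(q) / t^2, and t^(-(a+2)) exp(-q/(c^2 t)) is at most a constant times q^(-(a+2));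
  on [q, \<infinity>) the exponential is at most 1 and f(t) \<le> K f(q) (t/q)^(-\<gamma>) with a + \<gamma> > 1, so the
  tail is also O(q^(1-a) f(q)).\<close>

lemma powr_mult_exp_minus_le:
  fixes x p :: real assumes "x > 0" "p > 0"
  shows "x powr p * exp (-x) \<le> p powr p * exp (-p)"
proof -
  have "ln (x/p) \<le> x/p - 1" using assms by (intro ln_le_minus_one) auto
  then have "p * (ln x - ln p) \<le> p * (x/p - 1)"
    using assms by (intro mult_left_mono) (auto simp: ln_div)
  then have "exp (p * ln x - x) \<le> exp (p * ln p - p)" using assms by (simp add: algebra_simps)
  then show ?thesis using assms by (simp add: powr_def exp_diff exp_minus field_simps)
qed

lemma powr_minus_mult_exp_le:
  fixes t q p :: real assumes "t > 0" "q > 0" "p > 0"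
  shows "t powr (-p) * exp (-q/t) \<le> (p/q) powr p * exp (-p)"
proof -
  have "t powr (-p) * exp (-q/t) = (q/t) powr p * exp (-(q/t)) / q powr p"
    using assms by (simp add: powr_divide powr_minus_divide)
  also have "\<dots> \<le> p powr p * exp (-p) / q powr p"
    using assms by (intro divide_right_mono powr_mult_exp_minus_le) auto
  also have "\<dots> = (p/q) powr p * exp (-p)"
    using assms by (simp add: powr_divide)
  finally show ?thesis .
qed

lemma nn_integral_powr_atLeast:
  fixes q b :: real assumes "q > 0" "b > 1"
  shows "(\<integral>\<^sup>+ t. ennreal (t powr (-b)) * indicator {q..} t \<partial>lborel) = ennreal (q powr (1-b) / (b-1))"
proof -
  have "((\<lambda>t. t powr (-b)) has_integral q powr (1-b) / (b-1)) {q..}"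
    using has_integral_powr_to_inf[of "-b" q] assms by (simp add: minus_divide_right add.commute)
  then show ?thesis by (intro nn_integral_has_integral_lebesgue') auto
qed

lemma Fint_lower_bound:
  fixes f :: "real \<Rightarrow> real" and a c r :: real
  assumes fpos: "\<forall>t>0. f t > 0"
    and fdec: "\<forall>s t. 0 < s \<longrightarrow> s \<le> t \<longrightarrow> f t \<le> f s"
    and t2finc: "\<forall>s t. 0 < s \<longrightarrow> s \<le> t \<longrightarrow> s^2 * f s \<le> t^2 * f t"
    and a: "a \<ge> 0" and r: "r \<noteq> 0"
  shows "ennreal (2 powr (-a) * exp (-1/c^2) / 4 * ((r^2) powr (1-a) * f (r^2))) \<le> Fint a c f r"
proof -
  define q where "q = r^2"
  have q: "q > 0" using r by (simp add: q_def)
  define L where "L = (2*q) powr (-a) * exp (-1/c^2) * (f q / 4)"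
  have L0: "L \<ge> 0" using fpos q by (simp add: L_def less_imp_le)
  have "f q \<le> 4 * f (2*q)"
    using t2finc[rule_format, of q "2*q"] q by (simp add: power_mult_distrib)
  then have f_double: "f q / 4 \<le> f t" if "t \<le> 2*q" "q \<le> t" for t
    using fdec[rule_format, of t "2*q"] q that by linarith
  have "ennreal L * indicator {q..2*q} t \<le>
     indicator {0<..} t * ennreal (t powr (-a) * exp (-(r^2) / (c^2 * t)) * f t)" for t
  proof (cases "t \<in> {q..2*q}")
    case True
    then have t: "q \<le> t" "t \<le> 2*q" "t > 0" using q by auto
    have "(2*q) powr (-a) \<le> t powr (-a)" using t a by (intro powr_mono2') auto
    moreover have "exp (-1/c^2) \<le> exp (-(r^2) / (c^2 * t))"
      using t q by (cases "c = 0") (auto simp: q_def field_simps)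
    ultimately have "L \<le> t powr (-a) * exp (-(r^2) / (c^2 * t)) * f t"
      unfolding L_def using f_double[OF t(2,1)] fpos q by (intro mult_mono) auto
    then show ?thesis using t by (auto intro: ennreal_leI)
  qed auto
  then have "(\<integral>\<^sup>+ t. ennreal L * indicator {q..2*q} t \<partial>lborel) \<le> Fint a c f r"
    unfolding Fint_def by (intro nn_integral_mono)
  moreover have "(\<integral>\<^sup>+ t. ennreal L * indicator {q..2*q} t \<partial>lborel) = ennreal (L * q)"
    using q L0 by (simp add: nn_integral_cmult_indicator ennreal_mult)
  moreover have "L * q = 2 powr (-a) * exp (-1/c^2) / 4 * (q powr (1-a) * f q)"
    using q by (simp add: L_def powr_diff powr_minus powr_mult field_simps)
  ultimately show ?thesis unfolding q_def by metis
qed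

lemma powr_minus_add_two:
  fixes t a :: real assumes "t > 0"
  shows "t powr (-(a+2)) = t powr (-a) / t^2"
proof -
  have "t powr (-(a+2)) = t powr (-a) * t powr (-2)" by (simp add: powr_add[symmetric])
  then show ?thesis using assms by (simp add: powr_minus_divide powr_realpow)
qed

lemma Fint_integrand_le_below:
  fixes f :: "real \<Rightarrow> real" and a c q t :: real
  assumes fpos: "\<forall>t>0. f t > 0"
    and t2finc: "\<forall>s t. 0 < s \<longrightarrow> s \<le> t \<longrightarrow> s^2 * f s \<le> t^2 * f t"
    and a: "a > -2" and c: "c \<noteq> 0" and t: "0 < t" "t \<le> q"
  shows "t powr (-a) * exp (-q / (c^2 * t)) * f t
    \<le> ((a+2) * c^2) powr (a+2) * exp (-(a+2)) * (q powr (-a) * f q)"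
proof -
  have q: "q > 0" using t by linarith
  have "f t \<le> q^2 * f q / t^2"
    using t2finc[rule_format, of t q] t by (simp add: field_simps)
  then have "t powr (-a) * exp (-q / (c^2 * t)) * f t
      \<le> t powr (-a) * exp (-q / (c^2 * t)) * (q^2 * f q / t^2)"
    by (intro mult_left_mono) auto
  also have "\<dots> = q^2 * f q * (t powr (-(a+2)) * exp (-(q/c^2) / t))"
    unfolding powr_minus_add_two[OF t(1)] using t by (simp add: field_simps)
  also have "\<dots> \<le> q^2 * f q * (((a+2) / (q/c^2)) powr (a+2) * exp (-(a+2)))"
    using fpos q c a t by (intro mult_left_mono powr_minus_mult_exp_le) (auto simp: less_imp_le)
  also have "\<dots> = ((a+2) * c^2) powr (a+2) * exp (-(a+2)) * (q powr (-a) * f q)"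
    using q a c by (simp add: powr_divide powr_mult powr_add powr_minus_divide powr_realpow field_simps)
  finally show ?thesis .
qed

lemma Fint_integrand_le_above:
  fixes f :: "real \<Rightarrow> real" and a c q t K \<gamma> :: real
  assumes fpos: "\<forall>t>0. f t > 0" and q: "q > 0" and t: "q \<le> t"
    and decay: "f t \<le> K * f q * (t/q) powr (-\<gamma>)"
  shows "t powr (-a) * exp (-q / (c^2 * t)) * f t \<le> K * q powr \<gamma> * f q * t powr (-(a+\<gamma>))"
proof -
  have "exp (-q / (c^2 * t)) \<le> 1" and "f t > 0" using fpos q t by auto
  then have "t powr (-a) * exp (-q / (c^2 * t)) * f t \<le> t powr (-a) * f t"
    by (intro mult_right_mono) (auto intro: mult_left_le)
  also have "\<dots> \<le> t powr (-a) * (K * f q * (t/q) powr (-\<gamma>))"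
    using decay by (intro mult_left_mono) auto
  also have "\<dots> = K * q powr \<gamma> * f q * (t powr (-a) * t powr (-\<gamma>))"
    using q t by (simp add: powr_divide powr_minus field_simps)
  also have "\<dots> = K * q powr \<gamma> * f q * t powr (-(a+\<gamma>))"
    by (simp add: powr_add[symmetric])
  finally show ?thesis .
qed

lemma Fint_upper_bound:
  fixes f :: "real \<Rightarrow> real" and a c r K \<gamma> :: real
  assumes fpos: "\<forall>t>0. f t > 0"
    and t2finc: "\<forall>s t. 0 < s \<longrightarrow> s \<le> t \<longrightarrow> s^2 * f s \<le> t^2 * f t"
    and a: "a > -2" and c: "c \<noteq> 0" and r: "r \<noteq> 0"
    and \<gamma>: "\<gamma> > 1 - a" and K: "K \<ge> 0"
    and decay: "\<And>t. r^2 \<le> t \<Longrightarrow> f t \<le> K * f (r^2) * (t/r^2) powr (-\<gamma>)"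
  shows "Fint a c f r \<le> ennreal ((((a+2) * c^2) powr (a+2) * exp (-(a+2)) + K / (a+\<gamma>-1))
           * ((r^2) powr (1-a) * f (r^2)))"
proof -
  define q where "q = r^2"
  have q: "q > 0" using r by (simp add: q_def)
  define A where "A = ((a+2) * c^2) powr (a+2) * exp (-(a+2)) * (q powr (-a) * f q)"
  define B where "B = K * q powr \<gamma> * f q"
  have A0: "A \<ge> 0" and B0: "B \<ge> 0" using fpos q K by (auto simp: A_def B_def less_imp_le)
  have "indicator {0<..} t * ennreal (t powr (-a) * exp (-q / (c^2 * t)) * f t)
      \<le> ennreal A * indicator {0..q} t + ennreal (B * t powr (-(a+\<gamma>))) * indicator {q..} t" for t
  proof -
    consider "t \<le> 0" | "0 < t" "t \<le> q" | "q \<le> t" by linarith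
    then show ?thesis
    proof cases
      case 2
      then have "ennreal (t powr (-a) * exp (-q / (c^2 * t)) * f t) \<le> ennreal A"
        using Fint_integrand_le_below[OF fpos t2finc a c 2] by (simp add: A_def ennreal_leI)
      also have "\<dots> \<le> ennreal A * indicator {0..q} t + ennreal (B * t powr (-(a+\<gamma>))) * indicator {q..} t"
        using 2 by (simp add: add_increasing2)
      finally show ?thesis using 2 by simp
    next
      case 3
      then have "ennreal (t powr (-a) * exp (-q / (c^2 * t)) * f t) \<le> ennreal (B * t powr (-(a+\<gamma>)))"
        using decay Fint_integrand_le_above[OF fpos q 3, of K \<gamma> a c] by (simp add: B_def q_def ennreal_leI)
      also have "\<dots> \<le> ennreal A * indicator {0..q} t + ennreal (B * t powr (-(a+\<gamma>))) * indicator {q..} t"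
        using 3 by (simp add: add_increasing)
      finally show ?thesis using 3 q by simp
    qed simp
  qed
  then have "Fint a c f r \<le> (\<integral>\<^sup>+ t. ennreal A * indicator {0..q} t
      + ennreal (B * t powr (-(a+\<gamma>))) * indicator {q..} t \<partial>lborel)"
    unfolding Fint_def q_def by (intro nn_integral_mono)
  also have "\<dots> = (\<integral>\<^sup>+ t. ennreal A * indicator {0..q} t \<partial>lborel)
      + (\<integral>\<^sup>+ t. ennreal B * (ennreal (t powr (-(a+\<gamma>))) * indicator {q..} t) \<partial>lborel)"
    using B0 by (subst nn_integral_add) (auto simp: ennreal_mult mult.assoc)
  also have "\<dots> = ennreal (A * q) + ennreal (B * (q powr (1-(a+\<gamma>)) / (a+\<gamma>-1)))"
  proof -
    have "(\<integral>\<^sup>+ t. ennreal B * (ennreal (t powr (-(a+\<gamma>))) * indicator {q..} t) \<partial>lborel)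
        = ennreal B * ennreal (q powr (1-(a+\<gamma>)) / (a+\<gamma>-1))"
      using nn_integral_powr_atLeast[OF q, of "a+\<gamma>"] \<gamma> by (simp add: nn_integral_cmult)
    also have "\<dots> = ennreal (B * (q powr (1-(a+\<gamma>)) / (a+\<gamma>-1)))"
      by (rule ennreal_mult'[OF B0, symmetric])
    finally show ?thesis using q A0 by (simp add: nn_integral_cmult_indicator ennreal_mult)
  qed
  also have "\<dots> = ennreal ((((a+2) * c^2) powr (a+2) * exp (-(a+2)) + K / (a+\<gamma>-1))
           * (q powr (1-a) * f q))"
  proof -
    have "q powr \<gamma> * q powr (1-(a+\<gamma>)) = q powr (1-a)" by (simp add: powr_add[symmetric])
    moreover have "q powr (-a) * q = q powr (1-a)" using q by (simp add: powr_diff powr_minus field_simps)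
    ultimately have "A * q + B * (q powr (1-(a+\<gamma>)) / (a+\<gamma>-1))
        = (((a+2) * c^2) powr (a+2) * exp (-(a+2)) + K / (a+\<gamma>-1)) * (q powr (1-a) * f q)"
      unfolding A_def B_def by (simp add: algebra_simps add_divide_distrib)
    then show ?thesis using q A0 B0 \<gamma> by (simp add: ennreal_plus[symmetric])
  qed
  finally show ?thesis unfolding q_def .
qed

lemma tail_power_decay:
  fixes f :: "real \<Rightarrow> real" and a R :: real
  assumes fpos: "\<forall>t>0. f t > 0"
    and fdec: "\<forall>s t. 0 < s \<longrightarrow> s \<le> t \<longrightarrow> f t \<le> f s"
    and reg: "a \<le> 1 \<Longrightarrow> (\<exists>c'>0. \<exists>\<gamma>'>1 - a. \<forall>t>R. \<forall>x\<ge>1.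
                 f (t * x) / f t \<le> c' * x powr (-\<gamma>'))"
  obtains \<gamma> K where "\<gamma> > 1 - a" "K \<ge> 0"
    "\<And>q t. 0 < q \<Longrightarrow> (a \<le> 1 \<Longrightarrow> R < q) \<Longrightarrow> q \<le> t \<Longrightarrow> f t \<le> K * f q * (t/q) powr (-\<gamma>)"
proof (cases "a \<le> 1")
  case True
  from reg[OF True] obtain c' \<gamma>' where c': "c' > 0" and \<gamma>': "\<gamma>' > 1 - a"
    and ratio: "\<forall>t>R. \<forall>x\<ge>1. f (t * x) / f t \<le> c' * x powr (-\<gamma>')" by blast
  show ?thesis
  proof (rule that[OF \<gamma>' less_imp_le[OF c']])
    fix q t :: real assume q: "0 < q" and "a \<le> 1 \<Longrightarrow> R < q" and t: "q \<le> t"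
    then have "f (q * (t/q)) / f q \<le> c' * (t/q) powr (-\<gamma>')"
      using ratio True by (intro ratio[rule_format]) auto
    moreover have "q * (t/q) = t" and "f q > 0" using q fpos by auto
    ultimately show "f t \<le> c' * f q * (t/q) powr (-\<gamma>')" by (simp add: field_simps)
  qed
next
  case False
  show ?thesis
  proof (rule that[of 0 1])
    fix q t :: real assume "0 < q" "q \<le> t"
    then show "f t \<le> 1 * f q * (t/q) powr (-0)" using fdec by simp
  qed (use False in auto)
qed

theorem lemmaA2:
  fixes f :: "real \<Rightarrow> real" and a c R :: real
  assumes fpos: "\<forall>t>0. f t > 0"
    and fdec: "\<forall>s t. 0 < s \<longrightarrow> s \<le> t \<longrightarrow> f t \<le> f s"
    and t2finc: "\<forall>s t. 0 < s \<longrightarrow> s \<le> t \<longrightarrow> s^2 * f s \<le> t^2 * f t"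
    and a: "a \<ge> 0" and c: "c > 0"
    and R: "R \<ge> 0"
    and reg: "a \<le> 1 \<Longrightarrow> (\<exists>c'>0. \<exists>\<gamma>'>1 - a. \<forall>t>R. \<forall>x\<ge>1.
                 f (t * x) / f t \<le> c' * x powr (-\<gamma>'))"
  shows "\<exists>C1>0. \<exists>C2>0. \<forall>r > (if a \<le> 1 then sqrt R else 0).
           ennreal (C1 * (r powr (2 - 2 * a) * f (r^2))) \<le> Fint a c f r \<and>
           Fint a c f r \<le> ennreal (C2 * (r powr (2 - 2 * a) * f (r^2)))"
proof -
  obtain \<gamma> K where \<gamma>: "\<gamma> > 1 - a" and K: "K \<ge> 0" and decay:
    "\<And>q t. 0 < q \<Longrightarrow> (a \<le> 1 \<Longrightarrow> R < q) \<Longrightarrow> q \<le> t \<Longrightarrow> f t \<le> K * f q * (t/q) powr (-\<gamma>)"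
    using tail_power_decay[OF fpos fdec reg] by blast
  define C1 where "C1 = 2 powr (-a) * exp (-1/c^2) / 4"
  define C2 where "C2 = ((a+2) * c^2) powr (a+2) * exp (-(a+2)) + K / (a+\<gamma>-1)"
  have "C1 > 0" "C2 > 0" using a c K \<gamma> by (auto simp: C1_def C2_def intro!: add_pos_nonneg)
  moreover have "ennreal (C1 * (r powr (2 - 2 * a) * f (r^2))) \<le> Fint a c f r \<and>
      Fint a c f r \<le> ennreal (C2 * (r powr (2 - 2 * a) * f (r^2)))"
    if r: "r > (if a \<le> 1 then sqrt R else 0)" for r
  proof -
    have "r > 0" using r R by (smt (verit) real_sqrt_ge_zero)
    moreover have "R < r^2" if "a \<le> 1"
      using r R that real_sqrt_less_iff[of R "r^2"] \<open>r > 0\<close> by simp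
    moreover have "r powr (2 - 2 * a) = (r^2) powr (1 - a)"
    proof -
      have "(r^2) powr (1 - a) = (r powr 2) powr (1 - a)" using \<open>r > 0\<close> by (simp add: powr_numeral)
      then show ?thesis by (simp add: powr_powr algebra_simps)
    qed
    ultimately show ?thesis
      using Fint_lower_bound[OF fpos fdec t2finc a, of r c]
        Fint_upper_bound[OF fpos t2finc _ _ _ \<gamma> K, of c r] decay[of "r^2"] a c
      by (simp add: C1_def C2_def)
  qed
  ultimately show ?thesis by blast
qed

end
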